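(* Let $\overline{F}(x) = 1$ for $x < 2$ and $\overline{F}(x) = 2^{-\lfloor \log_2 x \rfloor}$ for $x \geq 2$, and let $\theta \in (0,1)$. Then $\theta\, \overline{F}(x) \leq \overline{F}(x/\theta)$ holds for all $x \geq 0$ if and only if $\theta \in \{2^{-k} : k \in \{1,2,3,\dots\}\}$. *)

theory Defs
  imports Complex_Main
begin

definition Fbar :: "real \<Rightarrow> real" where
  "Fbar x = (if x < 2 then 1 else 2 powr (- real_of_int \<lfloor>log 2 x\<rfloor>))"

end

theory Submission
  imports Defs
begin

text \<open>
  For \<open>x > 0\<close> we have \<open>Fbar x = 2 powr - max 0 \<lfloor>log 2 x\<rfloor>\<close>. If \<open>\<theta> = 2 powr - k\<close>, passing
  from \<open>x\<close> to \<open>x / \<theta>\<close> raises \<open>\<lfloor>log 2 x\<rfloor>\<close> by exactly \<open>k\<close>, so the exponent of \<open>Fbar\<close> drops by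
  at most \<open>k\<close>, which the factor \<open>\<theta>\<close> pays for. If instead \<open>s = - log 2 \<theta>\<close> lies strictly between
  integers \<open>k < s < k + 1\<close>, then at \<open>x = \<theta> * 2 powr (k + 2)\<close> the left side is
  \<open>\<theta> / 2 = 2 powr (- s - 1)\<close>, while the right side is \<open>Fbar (2 powr (k + 2)) = 2 powr - (k + 2)\<close>,
  which is smaller.
\<close>

lemma Fbar_eq_powr_max:
  assumes "x > 0"
  shows "Fbar x = 2 powr (- real_of_int (max 0 \<lfloor>log 2 x\<rfloor>))"
proof (cases "x < 2")
  case True
  have "log 2 x < 1" using True assms by (simp add: log_less_iff)
  then have "\<lfloor>log 2 x\<rfloor> \<le> 0" by linarith
  then show ?thesis using True by (simp add: Fbar_def)
next
  case False
  have "log 2 x \<ge> 1" using False assms by (simp add: le_log_iff)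
  then have "\<lfloor>log 2 x\<rfloor> \<ge> 1" by linarith
  then show ?thesis using False by (simp add: Fbar_def)
qed

lemma Fbar_powr_nat: "Fbar (2 powr real n) = 2 powr (- real n)"
  using Fbar_eq_powr_max[of "2 powr real n"] by simp

lemma Fbar_dilation_pow2:
  fixes k :: nat
  assumes "x \<ge> 0"
  shows "2 powr (- real k) * Fbar x \<le> Fbar (x / 2 powr (- real k))"
proof (cases "x = 0")
  case True
  have "2 powr (- real k) \<le> 2 powr 0" by (intro powr_mono) auto
  with True show ?thesis by (simp add: Fbar_def)
next
  case False
  then have x0: "x > 0" using assms by simp
  have "log 2 (x / 2 powr (- real k)) = log 2 x + real k"
    using x0 by (simp add: log_divide)
  then have floor_shift: "\<lfloor>log 2 (x / 2 powr (- real k))\<rfloor> = \<lfloor>log 2 x\<rfloor> + int k"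
    by (metis floor_add_int of_int_of_nat_eq)
  have "2 powr (- real k) * Fbar x = 2 powr (- real k - real_of_int (max 0 \<lfloor>log 2 x\<rfloor>))"
    using Fbar_eq_powr_max[OF x0] by (simp add: powr_add[symmetric])
  also have "\<dots> \<le> 2 powr (- real_of_int (max 0 (\<lfloor>log 2 x\<rfloor> + int k)))"
    by (intro powr_mono) auto
  also have "\<dots> = Fbar (x / 2 powr (- real k))"
    using Fbar_eq_powr_max[of "x / 2 powr (- real k)"] x0 floor_shift by simp
  finally show ?thesis .
qed

lemma Fbar_dilation_fails_between_pow2:
  fixes k :: nat
  assumes "0 < \<theta>" and "real k < - log 2 \<theta>" and "- log 2 \<theta> < real k + 1"
  shows "Fbar (2 powr (real k + 2)) < \<theta> * Fbar (\<theta> * 2 powr (real k + 2))"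
proof -
  define s where "s = - log 2 \<theta>"
  have \<theta>_eq: "\<theta> = 2 powr (- s)" using assms(1) by (simp add: s_def)
  have "log 2 (\<theta> * 2 powr (real k + 2)) = real k + 2 - s"
    using assms(1) by (simp add: s_def log_mult)
  then have "\<lfloor>log 2 (\<theta> * 2 powr (real k + 2))\<rfloor> = 1"
    using assms(2,3) unfolding s_def by linarith
  then have "Fbar (\<theta> * 2 powr (real k + 2)) = 2 powr (-1)"
    using Fbar_eq_powr_max[of "\<theta> * 2 powr (real k + 2)"] assms(1) by simp
  then have "\<theta> * Fbar (\<theta> * 2 powr (real k + 2)) = 2 powr (- s) * 2 powr (-1)"
    using \<theta>_eq by simp
  also have "\<dots> = 2 powr (- s - 1)" by (metis powr_add diff_conv_add_uminus)
  finally have "\<theta> * Fbar (\<theta> * 2 powr (real k + 2)) = 2 powr (- s - 1)" .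
  moreover have "Fbar (2 powr (real k + 2)) = 2 powr (- (real k + 2))"
    using Fbar_powr_nat[of "k + 2"] by (simp add: add.commute)
  moreover have "2 powr (- (real k + 2)) < 2 powr (- s - 1)"
    using assms(3) by (simp add: s_def)
  ultimately show ?thesis by simp
qed

theorem lemma14:
  fixes \<theta> :: real
  assumes "0 < \<theta>" and "\<theta> < 1"
  shows "(\<forall>x::real. x \<ge> 0 \<longrightarrow> \<theta> * Fbar x \<le> Fbar (x / \<theta>))
         \<longleftrightarrow> (\<exists>k::nat. k \<ge> 1 \<and> \<theta> = 2 powr (- real k))"
proof
  assume dilation: "\<forall>x::real. x \<ge> 0 \<longrightarrow> \<theta> * Fbar x \<le> Fbar (x / \<theta>)"
  define k where "k = nat \<lfloor>- log 2 \<theta>\<rfloor>"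
  have neg_log_pos: "- log 2 \<theta> > 0" using assms by simp
  then have k_le: "real k \<le> - log 2 \<theta>" and k_gt: "- log 2 \<theta> < real k + 1"
    by (auto simp: k_def)
  have "\<not> real k < - log 2 \<theta>"
  proof
    assume "real k < - log 2 \<theta>"
    from Fbar_dilation_fails_between_pow2[OF assms(1) this k_gt]
      and dilation[rule_format, of "\<theta> * 2 powr (real k + 2)"]
    show False using assms(1) by simp
  qed
  then have "- log 2 \<theta> = real k" using k_le by simp
  moreover have "\<theta> = 2 powr (- (- log 2 \<theta>))" using assms(1) by simp
  ultimately show "\<exists>k::nat. k \<ge> 1 \<and> \<theta> = 2 powr (- real k)"
    using neg_log_pos by (intro exI[of _ k]) auto
next
  assume "\<exists>k::nat. k \<ge> 1 \<and> \<theta> = 2 powr (- real k)"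
  then show "\<forall>x::real. x \<ge> 0 \<longrightarrow> \<theta> * Fbar x \<le> Fbar (x / \<theta>)"
    using Fbar_dilation_pow2 by blast
qed

end
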